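(* Let $F_1$ be the disjoint union of $S_0$ and $S_{2,1^2}$. Then $\mathrm{HDE}(F_1;S_{2,1^0})=2$; consequently, for every graph $G$, $\hom(S_0;G)\cdot\hom(S_{2,1^2};G)\ge\hom(S_{2,1^0};G)^2$.
   Context: All graphs are finite; $\hom(H;G)$ is the number of graph homomorphisms from $H$ to $G$ (so $\hom$ of a disjoint union is the product of the $\hom$'s of the components). $S_0$ is a single vertex; for $k\ge0$, $S_{2,1^k}$ is the tree with vertex set $\{1,\ldots,k+3\}$ and edge set $\{\{1,j\}:2\le j\le k+2\}\cup\{\{k+2,k+3\}\}$. The homomorphism domination exponent $\mathrm{HDE}(F_1;F_2)$ of graphs $F_1,F_2$ is the maximum real $c$ such that $\hom(F_1;G)\ge\hom(F_2;G)^c$ for every graph $G$. *)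

theory Defs
  imports Complex_Main "HOL-Library.FuncSet"
begin

type_synonym 'a graph = "'a set \<times> ('a \<Rightarrow> 'a \<Rightarrow> bool)"

definition verts :: "'a graph \<Rightarrow> 'a set" where "verts G = fst G"
definition adj :: "'a graph \<Rightarrow> 'a \<Rightarrow> 'a \<Rightarrow> bool" where "adj G = snd G"

definition is_graph :: "'a graph \<Rightarrow> bool" where
  "is_graph G \<longleftrightarrow> finite (verts G)
     \<and> (\<forall>u v. adj G u v \<longrightarrow> u \<in> verts G \<and> v \<in> verts G)
     \<and> (\<forall>u v. adj G u v \<longrightarrow> adj G v u)
     \<and> (\<forall>u. \<not> adj G u u)"

definition homs :: "'a graph \<Rightarrow> 'b graph \<Rightarrow> ('a \<Rightarrow> 'b) set" where
  "homs H G = {f \<in> verts H \<rightarrow>\<^sub>E verts G.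
                 \<forall>u v. adj H u v \<longrightarrow> adj G (f u) (f v)}"

definition hom :: "'a graph \<Rightarrow> 'b graph \<Rightarrow> nat" where
  "hom H G = card (homs H G)"

definition disj_union :: "'a graph \<Rightarrow> 'b graph \<Rightarrow> ('a + 'b) graph" where
  "disj_union H K = (Inl ` verts H \<union> Inr ` verts K,
     (\<lambda>x y. case (x, y) of (Inl a, Inl b) \<Rightarrow> adj H a b
                        | (Inr a, Inr b) \<Rightarrow> adj K a b
                        | _ \<Rightarrow> False))"

definition S0 :: "nat graph" where
  "S0 = ({1}, \<lambda>_ _. False)"

definition S21 :: "nat \<Rightarrow> nat graph" where
  "S21 k = ({1..k+3},
     (\<lambda>u v. (u = 1 \<and> 2 \<le> v \<and> v \<le> k+2) \<or> (v = 1 \<and> 2 \<le> u \<and> u \<le> k+2)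
          \<or> (u = k+2 \<and> v = k+3) \<or> (u = k+3 \<and> v = k+2)))"

text \<open>Homomorphism domination exponent: the maximum real c with
  hom(F1;G) \<ge> hom(F2;G)^c for all graphs G (graphs taken up to isomorphism,
  i.e. on vertex type nat).\<close>
definition HDE :: "'a graph \<Rightarrow> 'b graph \<Rightarrow> real" where
  "HDE F1 F2 = (GREATEST c::real. \<forall>G :: nat graph. is_graph G \<longrightarrow>
                   real (hom F2 G) powr c \<le> real (hom F1 G))"

end

theory Submission
  imports Defs "HOL-Analysis.Convex"
begin

(*
  Counting homomorphisms by the arc (u, w) onto which the edge {1, k+2} is mapped gives
  hom(S_{2,1^k}; G) = sum over arcs (u, w) of d(u)^k d(w). For k = 0 this is the sum of d(u)
  over arcs, and Cauchy-Schwarz with weights d(w) bounds its square by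
  (sum of d(u)^2 d(w)) * (sum of 1/d(w)) = hom(S_{2,1^2}; G) * #(non-isolated vertices),
  which is at most hom(S_{2,1^2}; G) * hom(S_0; G). On K_2 all three counts equal 2, so the
  exponent 2 cannot be increased.
*)

lemma Cauchy_Schwarz_ineq_sum_weighted:
  fixes x y :: "'i \<Rightarrow> real"
  assumes "\<And>i. i \<in> I \<Longrightarrow> y i > 0"
  shows "(\<Sum>i\<in>I. x i)\<^sup>2 \<le> (\<Sum>i\<in>I. (x i)\<^sup>2 * y i) * (\<Sum>i\<in>I. 1 / y i)"
proof -
  have "x i * sqrt (y i) * (1 / sqrt (y i)) = x i" if "i \<in> I" for i
    using assms[OF that] by simp
  then have "(\<Sum>i\<in>I. x i)\<^sup>2 = (\<Sum>i\<in>I. (x i * sqrt (y i)) * (1 / sqrt (y i)))\<^sup>2"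
    by simp
  also have "\<dots> \<le> (\<Sum>i\<in>I. (x i * sqrt (y i))\<^sup>2) * (\<Sum>i\<in>I. (1 / sqrt (y i))\<^sup>2)"
    by (rule Cauchy_Schwarz_ineq_sum)
  also have "\<dots> = (\<Sum>i\<in>I. (x i)\<^sup>2 * y i) * (\<Sum>i\<in>I. 1 / y i)"
    using assms by (simp add: power_mult_distrib power_divide less_imp_le)
  finally show ?thesis .
qed

definition nbhd :: "'a graph \<Rightarrow> 'a \<Rightarrow> 'a set" where
  "nbhd G v = {w \<in> verts G. adj G v w}"

definition deg :: "'a graph \<Rightarrow> 'a \<Rightarrow> nat" where
  "deg G v = card (nbhd G v)"

definition arcs :: "'a graph \<Rightarrow> ('a \<times> 'a) set" where
  "arcs G = {(u, w). adj G u w}"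

lemma adj_sym: "is_graph G \<Longrightarrow> adj G u w \<Longrightarrow> adj G w u"
  by (simp add: is_graph_def)

lemma finite_nbhd: "is_graph G \<Longrightarrow> finite (nbhd G v)"
  by (simp add: is_graph_def nbhd_def)

lemma arcs_eq_Sigma: "is_graph G \<Longrightarrow> arcs G = Sigma (verts G) (nbhd G)"
  by (auto simp: arcs_def nbhd_def is_graph_def)

lemma finite_arcs: "is_graph G \<Longrightarrow> finite (arcs G)"
  by (simp add: arcs_eq_Sigma finite_nbhd is_graph_def)

lemma deg_pos_if_arc:
  assumes "is_graph G" "(u, w) \<in> arcs G"
  shows "deg G w > 0"
proof -
  have "u \<in> nbhd G w"
    using assms by (auto simp: arcs_def nbhd_def is_graph_def)
  then show ?thesis
    using finite_nbhd[OF assms(1)] by (auto simp: deg_def card_gt_0_iff)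
qed

lemma sum_arcs_swap:
  assumes "is_graph G"
  shows "(\<Sum>(u, w)\<in>arcs G. f u w) = (\<Sum>(u, w)\<in>arcs G. f w u)"
proof -
  have "bij_betw prod.swap (arcs G) (arcs G)"
    by (rule bij_betw_byWitness[where f' = prod.swap]) (auto simp: arcs_def adj_sym[OF assms])
  from sum.reindex_bij_betw[OF this, of "\<lambda>(u, w). f u w"] show ?thesis
    by (simp add: case_prod_beta)
qed

lemma sum_arcs_fst:
  fixes g :: "'a \<Rightarrow> 'b::comm_semiring_1"
  assumes "is_graph G"
  shows "(\<Sum>(u, w)\<in>arcs G. g u) = (\<Sum>u\<in>verts G. of_nat (deg G u) * g u)"
  using assms by (simp add: arcs_eq_Sigma sum.Sigma[symmetric] finite_nbhd is_graph_def deg_def)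

lemma sum_arcs_inverse_deg_le:
  assumes "is_graph G"
  shows "(\<Sum>(u, w)\<in>arcs G. 1 / real (deg G w)) \<le> card (verts G)"
proof -
  have "(\<Sum>(u, w)\<in>arcs G. 1 / real (deg G w))
      = (\<Sum>u\<in>verts G. real (deg G u) * (1 / real (deg G u)))"
    using assms by (simp add: sum_arcs_swap[of G "\<lambda>u w. 1 / real (deg G w)"] sum_arcs_fst)
  also have "\<dots> \<le> (\<Sum>u\<in>verts G. 1)"
    by (intro sum_mono) simp
  finally show ?thesis by simp
qed

lemma homs_iff:
  "f \<in> homs H G \<longleftrightarrow> f \<in> verts H \<rightarrow>\<^sub>E verts G \<and> (\<forall>u v. adj H u v \<longrightarrow> adj G (f u) (f v))"
  by (simp add: homs_def)

lemma verts_S21: "verts (S21 k) = {1..k+3}"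
  by (simp add: verts_def S21_def)

lemma adj_S21:
  "adj (S21 k) u v \<longleftrightarrow> (u = 1 \<and> 2 \<le> v \<and> v \<le> k+2) \<or> (v = 1 \<and> 2 \<le> u \<and> u \<le> k+2)
     \<or> (u = k+2 \<and> v = k+3) \<or> (u = k+3 \<and> v = k+2)"
  by (simp add: adj_def S21_def)

definition S21_box :: "'a graph \<Rightarrow> nat \<Rightarrow> 'a \<Rightarrow> 'a \<Rightarrow> nat \<Rightarrow> 'a set" where
  "S21_box G k u w i =
     (if i = 1 then {u} else if i = k+2 then {w} else if i = k+3 then nbhd G w else nbhd G u)"

lemma S21_vertices_split: "{1..k+3::nat} = insert 1 (insert (k+2) (insert (k+3) {2..k+1}))"
  by auto

lemma mem_PiE_S21_box:
  "f \<in> PiE {1..k+3} (S21_box G k u w) \<longleftrightarrow>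
     f 1 = u \<and> f (k+2) = w \<and> f (k+3) \<in> nbhd G w \<and> (\<forall>i\<in>{2..k+1}. f i \<in> nbhd G u)
     \<and> f \<in> extensional {1..k+3}"
proof -
  have "(\<forall>i\<in>{2..k+1}. f i \<in> S21_box G k u w i) \<longleftrightarrow> (\<forall>i\<in>{2..k+1}. f i \<in> nbhd G u)"
    by (simp add: S21_box_def)
  then show ?thesis
    unfolding PiE_iff S21_vertices_split by (simp add: S21_box_def)
qed

lemma S21_box_determined:
  "f \<in> PiE {1..k+3} (S21_box G k u w) \<Longrightarrow> u = f 1 \<and> w = f (k+2)"
  unfolding mem_PiE_S21_box by simp

lemma S21_box_subset_verts:
  "is_graph G \<Longrightarrow> adj G u w \<Longrightarrow> S21_box G k u w i \<subseteq> verts G"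
  by (auto simp: S21_box_def nbhd_def is_graph_def)

lemma card_PiE_S21_box:
  assumes "is_graph G"
  shows "card (PiE {1..k+3} (S21_box G k u w)) = deg G u ^ k * deg G w"
  unfolding S21_vertices_split by (simp add: card_PiE S21_box_def deg_def)

lemma homs_S21:
  assumes G: "is_graph G"
  shows "homs (S21 k) G = (\<Union>(u, w)\<in>arcs G. PiE {1..k+3} (S21_box G k u w))"
proof (intro equalityI subsetI)
  fix f assume "f \<in> homs (S21 k) G"
  then have f: "f \<in> {1..k+3} \<rightarrow>\<^sub>E verts G"
    and hom: "\<And>a b. adj (S21 k) a b \<Longrightarrow> adj G (f a) (f b)"
    by (auto simp: homs_iff verts_S21)
  have "(f 1, f (k+2)) \<in> arcs G"
    using hom by (simp add: arcs_def adj_S21)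
  moreover have "f \<in> PiE {1..k+3} (S21_box G k (f 1) (f (k+2)))"
    unfolding mem_PiE_S21_box using f hom by (auto simp: PiE_iff nbhd_def adj_S21)
  ultimately show "f \<in> (\<Union>(u, w)\<in>arcs G. PiE {1..k+3} (S21_box G k u w))"
    by blast
next
  fix f assume "f \<in> (\<Union>(u, w)\<in>arcs G. PiE {1..k+3} (S21_box G k u w))"
  then obtain u w where uw: "adj G u w" and f: "f \<in> PiE {1..k+3} (S21_box G k u w)"
    by (auto simp: arcs_def)
  have "f \<in> {1..k+3} \<rightarrow>\<^sub>E verts G"
    using PiE_mono[of "{1..k+3}" "S21_box G k u w" "\<lambda>_. verts G"] S21_box_subset_verts[OF G uw] f
    by blast
  moreover have "adj G (f a) (f b)" if "adj (S21 k) a b" for a b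
  proof -
    have f_at: "f 1 = u" "f (k+2) = w" "adj G w (f (k+3))" "\<forall>i\<in>{2..k+1}. adj G u (f i)"
      using f unfolding mem_PiE_S21_box nbhd_def by auto
    then have "adj G u (f i)" if "2 \<le> i" "i \<le> k+2" for i
      using uw that by (cases "i = k+2") auto
    with that f_at show ?thesis
      by (auto simp: adj_S21 intro: adj_sym[OF G])
  qed
  ultimately show "f \<in> homs (S21 k) G"
    by (simp add: homs_iff verts_S21)
qed

lemma hom_S21:
  assumes G: "is_graph G"
  shows "hom (S21 k) G = (\<Sum>(u, w)\<in>arcs G. deg G u ^ k * deg G w)"
proof -
  have "hom (S21 k) G = card (\<Union>(u, w)\<in>arcs G. PiE {1..k+3} (S21_box G k u w))"
    by (simp add: hom_def homs_S21[OF G])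
  also have "\<dots> = (\<Sum>(u, w)\<in>arcs G. card (PiE {1..k+3} (S21_box G k u w)))"
    unfolding case_prod_beta
  proof (rule card_UN_disjoint)
    show "finite (arcs G)"
      using G by (rule finite_arcs)
    show "\<forall>p\<in>arcs G. finite (PiE {1..k+3} (S21_box G k (fst p) (snd p)))"
      using finite_nbhd[OF G] by (auto simp: S21_box_def intro!: finite_PiE)
    show "\<forall>p\<in>arcs G. \<forall>q\<in>arcs G. p \<noteq> q \<longrightarrow>
        PiE {1..k+3} (S21_box G k (fst p) (snd p)) \<inter> PiE {1..k+3} (S21_box G k (fst q) (snd q)) = {}"
    proof (intro ballI impI)
      fix p q :: "'a \<times> 'a"
      have "p = q" if "f \<in> PiE {1..k+3} (S21_box G k (fst p) (snd p))"
        and "f \<in> PiE {1..k+3} (S21_box G k (fst q) (snd q))" for f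
        using S21_box_determined[OF that(1)] S21_box_determined[OF that(2)] by (simp add: prod_eq_iff)
      moreover assume "p \<noteq> q"
      ultimately show "PiE {1..k+3} (S21_box G k (fst p) (snd p))
          \<inter> PiE {1..k+3} (S21_box G k (fst q) (snd q)) = {}"
        by blast
    qed
  qed
  also have "\<dots> = (\<Sum>(u, w)\<in>arcs G. deg G u ^ k * deg G w)"
    unfolding card_PiE_S21_box[OF G] ..
  finally show ?thesis .
qed

lemma hom_S0: "hom S0 G = card (verts G)"
proof -
  have "homs S0 G = {1} \<rightarrow>\<^sub>E verts G"
    by (auto simp: homs_def S0_def verts_def adj_def)
  then show ?thesis
    by (simp add: hom_def card_PiE)
qed

lemma hom_disj_union: "hom (disj_union H K) G = hom H G * hom K G"
proof -
  have verts_union: "verts (disj_union H K) = Inl ` verts H \<union> Inr ` verts K"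
    by (simp add: disj_union_def verts_def)
  have adj_union:
    "adj (disj_union H K) (Inl a) (Inl b) \<longleftrightarrow> adj H a b"
    "adj (disj_union H K) (Inr c) (Inr d) \<longleftrightarrow> adj K c d"
    "\<not> adj (disj_union H K) (Inl a) (Inr c)" "\<not> adj (disj_union H K) (Inr c) (Inl a)" for a b c d
    by (simp_all add: disj_union_def adj_def)
  have "bij_betw (\<lambda>f. (f \<circ> Inl, f \<circ> Inr)) (homs (disj_union H K) G) (homs H G \<times> homs K G)"
  proof (rule bij_betw_byWitness[where f' = "\<lambda>(g, h). case_sum g h"])
    show "\<forall>f\<in>homs (disj_union H K) G. (\<lambda>(g, h). case_sum g h) (f \<circ> Inl, f \<circ> Inr) = f"
      by (auto simp: fun_eq_iff split: sum.split)
    show "\<forall>p\<in>homs H G \<times> homs K G. (\<lambda>f. (f \<circ> Inl, f \<circ> Inr)) ((\<lambda>(g, h). case_sum g h) p) = p"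
      by auto
    show "(\<lambda>f. (f \<circ> Inl, f \<circ> Inr)) ` homs (disj_union H K) G \<subseteq> homs H G \<times> homs K G"
    proof (rule image_subsetI)
      fix f assume "f \<in> homs (disj_union H K) G"
      then have f: "f \<in> verts (disj_union H K) \<rightarrow>\<^sub>E verts G"
        and "\<And>x y. adj (disj_union H K) x y \<Longrightarrow> adj G (f x) (f y)"
        by (auto simp: homs_iff)
      moreover have "f (Inl a) = undefined" if "a \<notin> verts H" for a
        using PiE_arb[OF f] that by (auto simp: verts_union)
      moreover have "f (Inr c) = undefined" if "c \<notin> verts K" for c
        using PiE_arb[OF f] that by (auto simp: verts_union)
      ultimately show "(f \<circ> Inl, f \<circ> Inr) \<in> homs H G \<times> homs K G"
        by (auto simp: homs_iff verts_union adj_union PiE_iff extensional_def)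
    qed
    show "(\<lambda>(g, h). case_sum g h) ` (homs H G \<times> homs K G) \<subseteq> homs (disj_union H K) G"
    proof clarify
      fix g h assume "g \<in> homs H G" "h \<in> homs K G"
      moreover have "adj G (case_sum g h x) (case_sum g h y)" if "adj (disj_union H K) x y" for x y
        using that \<open>g \<in> homs H G\<close> \<open>h \<in> homs K G\<close>
        by (cases x; cases y) (auto simp: homs_iff adj_union)
      ultimately show "case_sum g h \<in> homs (disj_union H K) G"
        by (auto simp: homs_iff verts_union PiE_iff extensional_def split: sum.split)
    qed
  qed
  then show ?thesis
    by (simp add: hom_def bij_betw_same_card card_cartesian_product)
qed

lemma hom_S21_0_sq_le:
  assumes G: "is_graph G"
  shows "hom (S21 0) G ^ 2 \<le> hom S0 G * hom (S21 2) G"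
proof -
  let ?d = "\<lambda>v. real (deg G v)"
  have "real (hom (S21 0) G) = (\<Sum>(u, w)\<in>arcs G. ?d u)"
    using sum_arcs_swap[OF G, of "\<lambda>u w. ?d w"] by (simp add: hom_S21[OF G] case_prod_beta)
  then have "real (hom (S21 0) G ^ 2) = (\<Sum>(u, w)\<in>arcs G. ?d u)\<^sup>2"
    by simp
  also have "\<dots> \<le> (\<Sum>(u, w)\<in>arcs G. (?d u)\<^sup>2 * ?d w) * (\<Sum>(u, w)\<in>arcs G. 1 / ?d w)"
  proof -
    have "?d (snd p) > 0" if "p \<in> arcs G" for p
      using deg_pos_if_arc[OF G, of "fst p" "snd p"] that by simp
    from Cauchy_Schwarz_ineq_sum_weighted[of "arcs G", OF this] show ?thesis
      by (simp add: case_prod_beta)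
  qed
  also have "\<dots> \<le> (\<Sum>(u, w)\<in>arcs G. (?d u)\<^sup>2 * ?d w) * card (verts G)"
    by (intro mult_left_mono sum_arcs_inverse_deg_le[OF G] sum_nonneg) auto
  also have "\<dots> = real (hom S0 G * hom (S21 2) G)"
    by (simp add: hom_S0 hom_S21[OF G] case_prod_beta)
  finally show ?thesis
    by (simp only: of_nat_le_iff)
qed

definition K2 :: "nat graph" where
  "K2 = ({0, 1}, \<lambda>u v. u \<noteq> v \<and> u \<in> {0, 1} \<and> v \<in> {0, 1})"

lemma is_graph_K2: "is_graph K2"
  by (auto simp: is_graph_def K2_def verts_def adj_def)

lemma hom_S0_K2: "hom S0 K2 = 2"
  by (simp add: hom_S0 K2_def verts_def)

lemma hom_S21_K2: "hom (S21 k) K2 = 2"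
proof -
  have "arcs K2 = {(0, 1), (1, 0)}"
    by (auto simp: arcs_def K2_def adj_def)
  moreover have "nbhd K2 0 = {1}" "nbhd K2 1 = {0}"
    by (auto simp: nbhd_def K2_def verts_def adj_def)
  then have "deg K2 0 = 1" "deg K2 1 = 1"
    by (simp_all add: deg_def)
  ultimately show ?thesis
    by (simp add: hom_S21[OF is_graph_K2])
qed

lemma HDE_eqI:
  fixes F1 :: "'a graph" and F2 :: "'b graph" and G0 :: "nat graph"
  assumes "\<forall>G :: nat graph. is_graph G \<longrightarrow> real (hom F2 G) powr c \<le> real (hom F1 G)"
    and "is_graph G0" "hom F2 G0 > 1" "real (hom F1 G0) = real (hom F2 G0) powr c"
  shows "HDE F1 F2 = c"
  unfolding HDE_def
proof (rule Greatest_equality)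
  fix c'
  assume "\<forall>G :: nat graph. is_graph G \<longrightarrow> real (hom F2 G) powr c' \<le> real (hom F1 G)"
  then have "real (hom F2 G0) powr c' \<le> real (hom F1 G0)"
    using assms(2) by blast
  then have "real (hom F2 G0) powr c' \<le> real (hom F2 G0) powr c"
    using assms(4) by simp
  then show "c' \<le> c"
    using assms(3) by simp
qed (use assms(1) in blast)

theorem theorem3p6:
  shows "HDE (disj_union S0 (S21 2)) (S21 0) = 2
    \<and> (\<forall>G :: nat graph. is_graph G \<longrightarrow>
          hom S0 G * hom (S21 2) G \<ge> hom (S21 0) G ^ 2)"
proof
  show "\<forall>G :: nat graph. is_graph G \<longrightarrow> hom S0 G * hom (S21 2) G \<ge> hom (S21 0) G ^ 2"
    using hom_S21_0_sq_le by blast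
  then have "\<forall>G :: nat graph. is_graph G \<longrightarrow>
      real (hom (S21 0) G) powr 2 \<le> real (hom (disj_union S0 (S21 2)) G)"
    by (simp add: hom_disj_union flip: of_nat_mult of_nat_power)
  then show "HDE (disj_union S0 (S21 2)) (S21 0) = 2"
    by (rule HDE_eqI[OF _ is_graph_K2]) (simp_all add: hom_disj_union hom_S0_K2 hom_S21_K2)
qed

end
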